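(* Let $r\in(0,1]^K$ and fix an action $a\in[K]$. Let $\theta_1\in\mathbb{R}^K$ and $\eta>0$, and define the sequence $\theta_{t+1} = \theta_t + \eta(\hat r_t - \hat b_t)$ where the sampled action is fixed to $a_t = a$ for all $t\ge1$, $\hat r_t(i) = \frac{\mathbb{I}\{a_t=i\}}{\pi_{\theta_t}(i)}r(i)$ and $\hat b_t(i) = \left(\frac{\mathbb{I}\{a_t=i\}}{\pi_{\theta_t}(i)}-1\right)\pi_{\theta_t}^\top r$ for $i\in[K]$. Then $1-\pi_{\theta_t}(a)\in\Omega(1/t)$, i.e. there is a constant $C>0$ with $1-\pi_{\theta_t}(a)\ge C/t$ for all sufficiently large $t$.
   Context: $\pi_\theta(i) = e^{\theta(i)}/\sum_{i'\in[K]}e^{\theta(i')}$ is the softmax policy on $[K]=\{1,\dots,K\}$, $K\ge2$. *)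

theory Defs
  imports "HOL-Analysis.Analysis"
begin

text \<open>Softmax policy on [K] = {1..K}; parameters are functions nat => real,
  only the values on {1..K} matter.\<close>
definition softmax :: "nat \<Rightarrow> (nat \<Rightarrow> real) \<Rightarrow> nat \<Rightarrow> real" where
  "softmax K \<theta> i = exp (\<theta> i) / (\<Sum>j\<in>{1..K}. exp (\<theta> j))"

definition rhat :: "nat \<Rightarrow> (nat \<Rightarrow> real) \<Rightarrow> nat \<Rightarrow> (nat \<Rightarrow> real) \<Rightarrow> nat \<Rightarrow> real" where
  "rhat K r a \<theta> i = (if a = i then 1 else 0) / softmax K \<theta> i * r i"

definition bhat :: "nat \<Rightarrow> (nat \<Rightarrow> real) \<Rightarrow> nat \<Rightarrow> (nat \<Rightarrow> real) \<Rightarrow> nat \<Rightarrow> real" where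
  "bhat K r a \<theta> i = ((if a = i then 1 else 0) / softmax K \<theta> i - 1)
                      * (\<Sum>j\<in>{1..K}. softmax K \<theta> j * r j)"

definition pg_step :: "nat \<Rightarrow> (nat \<Rightarrow> real) \<Rightarrow> nat \<Rightarrow> real \<Rightarrow> (nat \<Rightarrow> real) \<Rightarrow> (nat \<Rightarrow> real)" where
  "pg_step K r a \<eta> \<theta> = (\<lambda>i. \<theta> i + \<eta> * (rhat K r a \<theta> i - bhat K r a \<theta> i))"

text \<open>theta_iter ... n is theta_{n+1} of the paper (theta_iter ... 0 = theta_1).\<close>
primrec theta_iter :: "nat \<Rightarrow> (nat \<Rightarrow> real) \<Rightarrow> nat \<Rightarrow> real \<Rightarrow> (nat \<Rightarrow> real) \<Rightarrow> nat \<Rightarrow> (nat \<Rightarrow> real)" where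
  "theta_iter K r a \<eta> \<theta>1 0 = \<theta>1"
| "theta_iter K r a \<eta> \<theta>1 (Suc n) = pg_step K r a \<eta> (theta_iter K r a \<eta> \<theta>1 n)"

end

theory Submission
  imports Defs
begin

text \<open>Every arm j \<noteq> a receives the same increment (\<eta> times the expected reward), so the
  softmax-weighted mean reward \<rho> of the arms other than a never changes, and the odds
  u = \<pi>(\<theta>)(a) / (1 - \<pi>(\<theta>)(a)) obey the scalar recursion u' = u exp (c / u)
  with c = \<eta> (r(a) - \<rho>). Since u exp (c / u) \<le> u + c exp (c / u), the odds grow
  at most linearly, and 1 - \<pi>(\<theta>)(a) = 1 / (1 + u) decays no faster than 1/t.\<close>

lemma exp_le_one_plus_mult_exp: "exp x \<le> 1 + x * exp (x::real)"
proof -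
  have "(1 - x) * exp x \<le> exp (- x) * exp x"
    using exp_ge_add_one_self[of "- x"] by (intro mult_right_mono) auto
  then show ?thesis by (simp add: exp_minus field_simps)
qed

lemma mult_exp_divide_le:
  fixes u c :: real
  assumes "u > 0"
  shows "u * exp (c / u) \<le> u + c * exp (c / u)"
  using mult_left_mono[OF exp_le_one_plus_mult_exp[of "c / u"], of u] assms
  by (simp add: algebra_simps)

lemma mult_exp_recursion_linear_bound:
  fixes u :: "nat \<Rightarrow> real" and c :: real
  assumes u0: "u 0 > 0" and rec: "\<And>n. u (Suc n) = u n * exp (c / u n)"
  shows "u n \<le> u 0 + real n * (\<bar>c\<bar> * exp (\<bar>c\<bar> / u 0))"
proof -
  define D where "D = \<bar>c\<bar> * exp (\<bar>c\<bar> / u 0)"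
  have pos: "u n > 0" for n
    using u0 by (induction n) (simp_all add: rec)
  have grows: "u 0 \<le> u n" if "c > 0" for n
  proof -
    have "incseq u"
      using pos that by (intro incseq_SucI) (simp add: rec less_imp_le)
    then show ?thesis by (simp add: incseq_def)
  qed
  have step: "u (Suc n) \<le> u n + D" for n
  proof (cases "c > 0")
    case True
    have "exp (c / u n) \<le> exp (\<bar>c\<bar> / u 0)"
      using True grows[OF True, of n] u0 by (simp add: frac_le)
    then have "c * exp (c / u n) \<le> D"
      unfolding D_def using True by simp
    then show ?thesis
      using mult_exp_divide_le[OF pos[of n], of c] rec[of n] by linarith
  next
    case False
    then have "c * exp (c / u n) \<le> 0" by (simp add: mult_nonpos_nonneg)
    moreover have "0 \<le> D" unfolding D_def by simp
    ultimately show ?thesis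
      using mult_exp_divide_le[OF pos[of n], of c] rec[of n] by linarith
  qed
  show ?thesis
    unfolding D_def[symmetric]
  proof (induction n)
    case (Suc n)
    then show ?case using step[of n] by (simp add: algebra_simps)
  qed simp
qed

lemma inverse_one_plus_ge_of_linear_bound:
  fixes x A D :: real and n :: nat
  assumes "0 \<le> x" "x \<le> A + real n * D" "0 \<le> A" "0 \<le> D"
  shows "1 / (1 + A + D) / real (Suc n) \<le> 1 / (1 + x)"
proof -
  have "(1 + A + D) * real (Suc n) = 1 + (A + real n * D) + D + real n * (1 + A)"
    by (simp add: algebra_simps)
  moreover have "0 \<le> real n * (1 + A)" using assms by simp
  ultimately have "1 + x \<le> (1 + A + D) * real (Suc n)"
    using assms by linarith
  then show ?thesis
    using assms by (simp add: divide_divide_eq_left divide_left_mono)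
qed

definition expected_reward :: "nat \<Rightarrow> (nat \<Rightarrow> real) \<Rightarrow> (nat \<Rightarrow> real) \<Rightarrow> real" where
  "expected_reward K r \<theta> = (\<Sum>j\<in>{1..K}. softmax K \<theta> j * r j)"

definition others_weight :: "nat \<Rightarrow> nat \<Rightarrow> (nat \<Rightarrow> real) \<Rightarrow> (nat \<Rightarrow> real) \<Rightarrow> real" where
  "others_weight K a \<theta> f = (\<Sum>j\<in>{1..K}-{a}. exp (\<theta> j) * f j)"

definition softmax_odds :: "nat \<Rightarrow> nat \<Rightarrow> (nat \<Rightarrow> real) \<Rightarrow> real" where
  "softmax_odds K a \<theta> = exp (\<theta> a) / others_weight K a \<theta> (\<lambda>_. 1)"

definition others_mean_reward :: "nat \<Rightarrow> (nat \<Rightarrow> real) \<Rightarrow> nat \<Rightarrow> (nat \<Rightarrow> real) \<Rightarrow> real" where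
  "others_mean_reward K r a \<theta> = others_weight K a \<theta> r / others_weight K a \<theta> (\<lambda>_. 1)"

lemma others_weight_one_pos:
  assumes "K \<ge> 2"
  shows "0 < others_weight K a \<theta> (\<lambda>_. 1)"
proof -
  have "{1..K} - {a} \<noteq> {}"
  proof
    assume "{1..K} - {a} = {}"
    then have "card {1..K} \<le> card {a}" by (intro card_mono) auto
    with assms show False by simp
  qed
  then show ?thesis unfolding others_weight_def by (intro sum_pos) auto
qed

lemma sum_exp_split_others:
  assumes "a \<in> {1..K}"
  shows "(\<Sum>j\<in>{1..K}. exp (\<theta> j) * f j) = exp (\<theta> a) * f a + others_weight K a \<theta> f"
  unfolding others_weight_def using assms by (simp add: sum.remove)

lemma softmax_eq_others:
  assumes "a \<in> {1..K}"
  shows "softmax K \<theta> a = exp (\<theta> a) / (exp (\<theta> a) + others_weight K a \<theta> (\<lambda>_. 1))"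
  unfolding softmax_def using sum_exp_split_others[OF assms, of \<theta> "\<lambda>_. 1"] by simp

lemma expected_reward_eq_others:
  assumes "a \<in> {1..K}"
  shows "expected_reward K r \<theta>
    = (exp (\<theta> a) * r a + others_weight K a \<theta> r) / (exp (\<theta> a) + others_weight K a \<theta> (\<lambda>_. 1))"
  using sum_exp_split_others[OF assms, of \<theta> r] sum_exp_split_others[OF assms, of \<theta> "\<lambda>_. 1"]
  unfolding expected_reward_def softmax_def by (simp add: sum_divide_distrib[symmetric])

lemma one_minus_softmax_eq_odds:
  assumes "K \<ge> 2" "a \<in> {1..K}"
  shows "1 - softmax K \<theta> a = 1 / (1 + softmax_odds K a \<theta>)"
proof -
  have "1 - E / (E + S) = 1 / (1 + E / S)" if "0 < E" "0 < S" for E S :: real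
    using that by (simp add: field_simps)
  then show ?thesis
    using others_weight_one_pos[OF assms(1)]
    unfolding softmax_eq_others[OF assms(2)] softmax_odds_def by simp
qed

lemma advantage_over_softmax_eq:
  assumes "K \<ge> 2" "a \<in> {1..K}"
  shows "(r a - expected_reward K r \<theta>) / softmax K \<theta> a
    = (r a - others_mean_reward K r a \<theta>) / softmax_odds K a \<theta>"
proof -
  have "(x - (E * x + R) / (E + S)) / (E / (E + S)) = (x - R / S) / (E / S)"
    if "0 < E" "0 < S" for E S R x :: real
  proof -
    have "x - (E * x + R) / (E + S) = (S * x - R) / (E + S)"
      using that by (simp add: field_simps)
    moreover have "x - R / S = (S * x - R) / S"
      using that by (simp add: field_simps)
    ultimately show ?thesis
      using that by simp
  qed
  then show ?thesis
    using others_weight_one_pos[OF assms(1)]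
    unfolding expected_reward_eq_others[OF assms(2)] softmax_eq_others[OF assms(2)]
      softmax_odds_def others_mean_reward_def by simp
qed

lemma pg_step_other:
  "j \<noteq> a \<Longrightarrow> pg_step K r a \<eta> \<theta> j = \<theta> j + \<eta> * expected_reward K r \<theta>"
  unfolding pg_step_def rhat_def bhat_def expected_reward_def by simp

lemma pg_step_chosen:
  "pg_step K r a \<eta> \<theta> a
    = \<theta> a + \<eta> * expected_reward K r \<theta> + \<eta> * ((r a - expected_reward K r \<theta>) / softmax K \<theta> a)"
  unfolding pg_step_def rhat_def bhat_def expected_reward_def[symmetric]
  by (simp add: diff_divide_distrib algebra_simps)

lemma others_weight_pg_step:
  "others_weight K a (pg_step K r a \<eta> \<theta>) f = exp (\<eta> * expected_reward K r \<theta>) * others_weight K a \<theta> f"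
  unfolding others_weight_def sum_distrib_left
  by (intro sum.cong) (auto simp: pg_step_other exp_add)

lemma others_mean_reward_pg_step:
  "others_mean_reward K r a (pg_step K r a \<eta> \<theta>) = others_mean_reward K r a \<theta>"
  unfolding others_mean_reward_def others_weight_pg_step by simp

lemma softmax_odds_pg_step:
  assumes "K \<ge> 2" "a \<in> {1..K}"
  shows "softmax_odds K a (pg_step K r a \<eta> \<theta>)
    = softmax_odds K a \<theta> * exp (\<eta> * (r a - others_mean_reward K r a \<theta>) / softmax_odds K a \<theta>)"
  unfolding softmax_odds_def[of K a "pg_step K r a \<eta> \<theta>"] others_weight_pg_step pg_step_chosen
    advantage_over_softmax_eq[OF assms]
  by (simp add: exp_add softmax_odds_def)

lemma others_mean_reward_theta_iter:
  "others_mean_reward K r a (theta_iter K r a \<eta> \<theta>1 n) = others_mean_reward K r a \<theta>1"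
  by (induction n) (simp_all add: others_mean_reward_pg_step)

theorem lemma8:
  fixes K :: nat and r :: "nat \<Rightarrow> real" and a :: nat
    and \<theta>1 :: "nat \<Rightarrow> real" and \<eta> :: real
  assumes "K \<ge> 2"
    and "\<And>i. i \<in> {1..K} \<Longrightarrow> 0 < r i \<and> r i \<le> 1"
    and "a \<in> {1..K}"
    and "\<eta> > 0"
  shows "\<exists>C>0. \<forall>\<^sub>F t in sequentially.
           1 - softmax K (theta_iter K r a \<eta> \<theta>1 (t - 1)) a \<ge> C / real t"
proof -
  define u where "u n = softmax_odds K a (theta_iter K r a \<eta> \<theta>1 n)" for n
  define c where "c = \<eta> * (r a - others_mean_reward K r a \<theta>1)"
  define D where "D = \<bar>c\<bar> * exp (\<bar>c\<bar> / u 0)"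
  have u_pos: "0 < u n" for n
    unfolding u_def softmax_odds_def using others_weight_one_pos[OF assms(1)] by simp
  have "u (Suc n) = u n * exp (c / u n)" for n
    unfolding u_def c_def
    using softmax_odds_pg_step[OF assms(1,3), of r \<eta> "theta_iter K r a \<eta> \<theta>1 n"]
      others_mean_reward_theta_iter[of K r a \<eta> \<theta>1 n]
    by simp
  then have u_le: "u n \<le> u 0 + real n * D" for n
    unfolding D_def by (rule mult_exp_recursion_linear_bound[OF u_pos])
  have "1 / (1 + u 0 + D) / real t \<le> 1 - softmax K (theta_iter K r a \<eta> \<theta>1 (t - 1)) a"
    if "t \<ge> 1" for t
  proof -
    have "1 / (1 + u 0 + D) / real (Suc (t - 1)) \<le> 1 / (1 + u (t - 1))"
      using less_imp_le[OF u_pos[of "t - 1"]] u_le[of "t - 1"] less_imp_le[OF u_pos[of 0]]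
      by (rule inverse_one_plus_ge_of_linear_bound) (simp add: D_def)
    with that show ?thesis
      by (simp add: one_minus_softmax_eq_odds[OF assms(1,3)] u_def)
  qed
  moreover have "0 < 1 / (1 + u 0 + D)"
    using u_pos[of 0] by (simp add: D_def add_pos_nonneg)
  ultimately show ?thesis
    by (intro exI[of _ "1 / (1 + u 0 + D)"] conjI eventually_sequentiallyI[of 1]) auto
qed

end
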